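(* Fix an integer $t\geq 1$ and a real $\alpha$ with $\frac{1}{2}<\alpha<1$. Then, as $m\to\infty$ through values for which $\alpha m$ is an integer, \[ t\cdot \sqrt{\frac{1-\alpha}{8(\alpha m)^3}}\cdot 2^{mH_2(\alpha)}\cdot(1+o(1)) \leq R_t(\alpha m,m)\leq t\cdot 4^{H_2(\alpha)}\cdot 2^{mH_2(\alpha)}\cdot (1+o(1)). \]
   Context: $H_2(x)=-x\log_2 x-(1-x)\log_2(1-x)$ is the binary entropy function. For a $t\times n$ matrix $\mathbf{v}$ over $\mathbb{F}_q$ with rows $\overline{v}_1,\dots,\overline{v}_t$, its $t$-weight is $\mathrm{wt}^{(t)}(\mathbf{v})=\left|\bigcup_{i=1}^t \mathrm{supp}(\overline{v}_i)\right|$, and $d^{(t)}(\mathbf{u},\mathbf{v})=\mathrm{wt}^{(t)}(\mathbf{u}-\mathbf{v})$. For a linear code $C\subseteq\mathbb{F}_q^n$ and $t\in\mathbb{N}$, let $C^t$ be the set of $t\times n$ matrices all of whose rows lie in $C$. The $t$-th generalized covering radius $R_t(C)$ is the smallest integer $\rho$ such that for every $\mathbf{v}\in\mathbb{F}_q^{t\times n}$ there is $\mathbf{c}\in C^t$ with $d^{(t)}(\mathbf{v},\mathbf{c})\leq \rho$. Binary Reed–Muller codes $\mathrm{RM}(r,m)\subseteq\mathbb{F}_2^{2^m}$ ($0\le r\le m$) are defined recursively: $\mathrm{RM}(0,m)=\{\overline{0},\overline{1}\}$, $\mathrm{RM}(m,m)=\mathbb{F}_2^{2^m}$, and for $1\leq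 r\leq m-1$, $\mathrm{RM}(r,m)=\{(\overline{u},\overline{u}+\overline{v}) : \overline{u}\in \mathrm{RM}(r,m-1),\ \overline{v}\in\mathrm{RM}(r-1,m-1)\}$. It is a linear code of length $2^m$ and dimension $\sum_{i=0}^r\binom{m}{i}$. Write $R_t(r,m)=R_t(\mathrm{RM}(r,m))$. *)

theory Defs
  imports "HOL-Analysis.Analysis"
begin

definition H2 :: "real \<Rightarrow> real" where
  "H2 x = - x * log 2 x - (1 - x) * log 2 (1 - x)"

text \<open>Vectors over F_2 are bool lists (True = 1, addition = xor, i.e. (\<noteq>)).\<close>
fun RM :: "nat \<Rightarrow> nat \<Rightarrow> bool list set" where
  "RM 0 m = {replicate (2^m) False, replicate (2^m) True}"
| "RM (Suc r) 0 = {v. length v = 1}"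
| "RM (Suc r) (Suc m) =
     (if Suc m \<le> Suc r then {v. length v = 2^(Suc m)}
      else {u @ map2 (\<noteq>) u v | u v. u \<in> RM (Suc r) m \<and> v \<in> RM r m})"

definition is_matrix :: "nat \<Rightarrow> nat \<Rightarrow> bool list list \<Rightarrow> bool" where
  "is_matrix t n V \<longleftrightarrow> length V = t \<and> (\<forall>v\<in>set V. length v = n)"

definition twt :: "bool list list \<Rightarrow> nat" where
  "twt V = card {j. \<exists>v\<in>set V. j < length v \<and> v ! j}"

definition tdist :: "bool list list \<Rightarrow> bool list list \<Rightarrow> nat" where
  "tdist U V = twt (map2 (map2 (\<noteq>)) U V)"

definition gen_cov_radius :: "nat \<Rightarrow> nat \<Rightarrow> bool list set \<Rightarrow> nat" where
  "gen_cov_radius t n C = (LEAST \<rho>. \<forall>V. is_matrix t n V \<longrightarrow>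
      (\<exists>Cm. is_matrix t n Cm \<and> set Cm \<subseteq> C \<and> tdist V Cm \<le> \<rho>))"

definition R_RM :: "nat \<Rightarrow> nat \<Rightarrow> nat \<Rightarrow> nat" where
  "R_RM t r m = gen_cov_radius t (2^m) (RM r m)"

end

(* Upper bound: covering the two halves of a matrix one after the other along the
   (u | u + v) recursion shows that R_t(r, m) is at most the redundancy
   n - dim RM(r, m) = sum_{i < m - r} (m choose i), and for r = alpha m this partial
   binomial sum is at most 2^(m H(alpha)).
   Lower bound: counting matrices (2^(tn) <= |C|^t * (n choose rho) * 2^(rho t)) gives
   t (n - dim RM(r, m)) <= R_t(r, m) (m + t); the redundancy contains the term
   (m choose (m - r - 1)), and Stirling-type bounds on ln n! bound it from below by
   e^(-1 - o(1)) sqrt(m / (k r)) 2^(m H(alpha)) with k = m - r.  Since e^(-1) > 1 / sqrt 8,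
   both bounds of the theorem hold eventually with the error terms taken to be 0. *)

theory Submission
  imports Defs "HOL-Real_Asymp.Real_Asymp"
begin

section \<open>Coverings with respect to the t-weight\<close>

definition covers :: "nat \<Rightarrow> nat \<Rightarrow> bool list set \<Rightarrow> nat \<Rightarrow> bool" where
  "covers t n C \<rho> \<longleftrightarrow> (\<forall>V. is_matrix t n V \<longrightarrow>
      (\<exists>Cm. is_matrix t n Cm \<and> set Cm \<subseteq> C \<and> tdist V Cm \<le> \<rho>))"

lemma gen_cov_radius_eq_Least: "gen_cov_radius t n C = (LEAST \<rho>. covers t n C \<rho>)"
  unfolding gen_cov_radius_def covers_def ..

lemma is_matrix_iff: "is_matrix t n V \<longleftrightarrow> length V = t \<and> (\<forall>i<t. length (V ! i) = n)"
  unfolding is_matrix_def by (metis in_set_conv_nth)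

lemma finite_vectors: "finite {v :: bool list. length v = n}"
  using finite_lists_length_eq[of "UNIV :: bool set" n] by simp

lemma card_vectors: "card {v :: bool list. length v = n} = 2 ^ n"
  using card_lists_length_eq[of "UNIV :: bool set" n] by (simp add: card_UNIV_bool)

lemma finite_is_matrix: "finite {V. is_matrix t n V}"
  and card_is_matrix: "card {V. is_matrix t n V} = 2 ^ (t * n)"
proof -
  note fin = finite_vectors[of n] and card = card_vectors[of n]
  have eq: "{V. is_matrix t n V} = {V. set V \<subseteq> {v. length v = n} \<and> length V = t}"
    unfolding is_matrix_def by auto
  show "finite {V. is_matrix t n V}"
    unfolding eq by (rule finite_lists_length_eq[OF fin])
  show "card {V. is_matrix t n V} = 2 ^ (t * n)"
    unfolding eq card_lists_length_eq[OF fin] card by (simp add: power_mult[symmetric] mult.commute)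
qed

definition supp :: "bool list \<Rightarrow> nat set" where
  "supp v = {j. j < length v \<and> v ! j}"

lemma supp_subset: "supp v \<subseteq> {..<length v}"
  unfolding supp_def by auto

lemma finite_supp: "finite (supp v)"
  using finite_subset[OF supp_subset] by blast

lemma supp_append: "supp (u @ w) = supp u \<union> (+) (length u) ` supp w"
  unfolding supp_def by (force simp: nth_append image_iff)

lemma twt_eq_card_supp: "twt V = card (\<Union>v\<in>set V. supp v)"
  unfolding twt_def supp_def by (rule arg_cong[where f = card]) auto

lemma twt_le_card:
  assumes "finite J" "\<And>v. v \<in> set V \<Longrightarrow> supp v \<subseteq> J"
  shows "twt V \<le> card J"
  unfolding twt_eq_card_supp using assms by (intro card_mono) auto

lemma twt_append_le:
  assumes "\<forall>p\<in>set P. length p = n"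
  shows "twt (map2 (@) P Q) \<le> twt P + twt Q"
proof -
  let ?X = "\<Union>p\<in>set P. supp p" and ?Y = "\<Union>q\<in>set Q. supp q"
  have "supp (p @ q) \<subseteq> ?X \<union> (+) n ` ?Y" if "(p, q) \<in> set (zip P Q)" for p q
    using assms set_zip_leftD[OF that] set_zip_rightD[OF that] by (auto simp: supp_append)
  then have "(\<Union>v\<in>set (map2 (@) P Q). supp v) \<subseteq> ?X \<union> (+) n ` ?Y"
    by auto
  then have "twt (map2 (@) P Q) \<le> card (?X \<union> (+) n ` ?Y)"
    unfolding twt_eq_card_supp by (intro card_mono) (auto simp: finite_supp)
  also have "\<dots> \<le> card ?X + card ?Y"
    by (intro order.trans[OF card_Un_le] add_left_mono card_image_le) (auto simp: finite_supp)
  finally show ?thesis unfolding twt_eq_card_supp .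
qed

abbreviation madd :: "bool list list \<Rightarrow> bool list list \<Rightarrow> bool list list" where
  "madd \<equiv> map2 (map2 (\<noteq>))"

lemma map2_xor_assoc: "map2 (\<noteq>) (map2 (\<noteq>) a b) c = map2 (\<noteq>) a (map2 (\<noteq>) b c)"
  by (rule nth_equalityI) auto

lemma madd_assoc: "madd (madd A B) C = madd A (madd B C)"
  using map2_xor_assoc by (intro nth_equalityI) auto

lemma madd_cancel: "is_matrix t n V \<Longrightarrow> is_matrix t n W \<Longrightarrow> madd (madd V W) W = V"
  by (rule nth_equalityI) (auto simp: is_matrix_iff intro!: nth_equalityI)

lemma is_matrix_madd: "is_matrix t n A \<Longrightarrow> is_matrix t n B \<Longrightarrow> is_matrix t n (madd A B)"
  by (auto simp: is_matrix_iff)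

lemma madd_append:
  assumes "is_matrix t n A" "is_matrix t n C" "length B = t" "length D = t"
  shows "madd (map2 (@) A B) (map2 (@) C D) = map2 (@) (madd A C) (madd B D)"
  using assms by (intro nth_equalityI) (auto simp: is_matrix_iff zip_append)

lemma covers_full: "covers t n {v. length v = n} 0"
  unfolding covers_def
proof (intro allI impI)
  fix V assume "is_matrix t n V"
  moreover have "twt (madd V V) = 0"
    unfolding twt_def by (simp add: zip_same_conv_map)
  ultimately show "\<exists>Cm. is_matrix t n Cm \<and> set Cm \<subseteq> {v. length v = n} \<and> tdist V Cm \<le> 0"
    unfolding tdist_def is_matrix_def by auto
qed

lemma covers_repetition: "covers t n {replicate n False, replicate n True} (n - 1)"
  unfolding covers_def
proof (intro allI impI)
  fix V assume V: "is_matrix t n V"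
  define Cm where "Cm = map (\<lambda>v. replicate n (v ! 0)) V"
  have madd_Cm: "madd V Cm = map (\<lambda>v. map2 (\<noteq>) v (replicate n (v ! 0))) V"
    unfolding Cm_def by (induction V) auto
  have "is_matrix t n Cm"
    using V by (simp add: is_matrix_def Cm_def)
  moreover have "set Cm \<subseteq> {replicate n False, replicate n True}"
    by (auto simp: Cm_def)
  moreover have "tdist V Cm \<le> card ({..<n} - {0})"
    unfolding tdist_def
  proof (rule twt_le_card)
    fix w assume "w \<in> set (madd V Cm)"
    then obtain v where "v \<in> set V" "w = map2 (\<noteq>) v (replicate n (v ! 0))"
      unfolding madd_Cm by auto
    moreover have "length v = n"
      using V \<open>v \<in> set V\<close> by (simp add: is_matrix_def)
    ultimately show "supp w \<subseteq> {..<n} - {0}"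
      by (auto simp: supp_def)
  qed simp
  moreover have "card ({..<n} - {0}) = n - 1"
    by (cases n) auto
  ultimately show "\<exists>Cm. is_matrix t n Cm \<and> set Cm \<subseteq> {replicate n False, replicate n True} \<and>
      tdist V Cm \<le> n - 1"
    by auto
qed

lemma covers_plotkin:
  assumes cov1: "covers t n C1 \<rho>1" and cov2: "covers t n C2 \<rho>2"
  shows "covers t (2 * n) {u @ map2 (\<noteq>) u v | u v. u \<in> C1 \<and> v \<in> C2} (\<rho>1 + \<rho>2)"
  unfolding covers_def
proof (intro allI impI)
  fix V assume V: "is_matrix t (2 * n) V"
  define A where "A = map (take n) V"
  define B where "B = map (drop n) V"
  have A: "is_matrix t n A" and B: "is_matrix t n B"
    using V by (auto simp: is_matrix_def A_def B_def)
  have V_split: "V = map2 (@) A B"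
    unfolding A_def B_def by (induction V) auto
  obtain U where U: "is_matrix t n U" "set U \<subseteq> C1" "tdist A U \<le> \<rho>1"
    using cov1 A unfolding covers_def by blast
  obtain W where W: "is_matrix t n W" "set W \<subseteq> C2" "tdist (madd B U) W \<le> \<rho>2"
    using cov2 is_matrix_madd[OF B U(1)] unfolding covers_def by blast
  define Cm where "Cm = map2 (@) U (madd U W)"
  have "is_matrix t (2 * n) Cm"
    using U(1) W(1) by (simp add: is_matrix_iff Cm_def)
  moreover have "set Cm \<subseteq> {u @ map2 (\<noteq>) u v | u v. u \<in> C1 \<and> v \<in> C2}"
    using U(1,2) W(1,2) by (fastforce simp: Cm_def set_zip is_matrix_iff)
  moreover have "tdist V Cm \<le> \<rho>1 + \<rho>2"
  proof -
    have "tdist V Cm = twt (map2 (@) (madd A U) (madd B (madd U W)))"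
      unfolding tdist_def V_split Cm_def
      using A B U(1) W(1) by (subst madd_append) (auto simp: is_matrix_iff)
    also have "\<dots> \<le> twt (madd A U) + twt (madd B (madd U W))"
      using is_matrix_madd[OF A U(1)] by (intro twt_append_le) (auto simp: is_matrix_def)
    also have "\<dots> = tdist A U + tdist (madd B U) W"
      by (simp only: tdist_def madd_assoc)
    finally show ?thesis using U(3) W(3) by linarith
  qed
  ultimately show "\<exists>Cm. is_matrix t (2 * n) Cm \<and>
      set Cm \<subseteq> {u @ map2 (\<noteq>) u v | u v. u \<in> C1 \<and> v \<in> C2} \<and> tdist V Cm \<le> \<rho>1 + \<rho>2"
    by blast
qed

lemma card_plotkin:
  assumes "C1 \<subseteq> {v. length v = n}" "C2 \<subseteq> {v. length v = n}"
  shows "card {u @ map2 (\<noteq>) u v | u v. u \<in> C1 \<and> v \<in> C2} = card C1 * card C2"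
proof -
  let ?f = "\<lambda>(u, v). u @ map2 (\<noteq>) u v"
  have "inj_on ?f (C1 \<times> C2)"
  proof (rule inj_onI, clarify)
    fix u v u' v'
    assume uv: "u \<in> C1" "v \<in> C2" "u' \<in> C1" "v' \<in> C2"
      and eq: "u @ map2 (\<noteq>) u v = u' @ map2 (\<noteq>) u' v'"
    moreover have len: "length u = n" "length u' = n" "length v = n" "length v' = n"
      using uv assms by auto
    ultimately have "u = u'" and eq': "map2 (\<noteq>) u v = map2 (\<noteq>) u v'"
      by (auto simp: append_eq_append_conv)
    have "v = v'"
    proof (rule nth_equalityI)
      show "length v = length v'" using len by simp
      fix i assume "i < length v"
      then show "v ! i = v' ! i"
        using arg_cong[OF eq', of "\<lambda>w. w ! i"] len by auto
    qed
    with \<open>u = u'\<close> show "u = u' \<and> v = v'" ..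
  qed
  moreover have "{u @ map2 (\<noteq>) u v | u v. u \<in> C1 \<and> v \<in> C2} = ?f ` (C1 \<times> C2)"
    by auto
  ultimately show ?thesis
    by (simp add: card_image card_cartesian_product)
qed

section \<open>Reed--Muller codes\<close>

text \<open>This is \<open>2 ^ m - dim RM(r, m)\<close>: by the symmetry of binomial coefficients the dimension
  \<open>\<Sum>i\<le>r. m choose i\<close> accounts for all terms except those with \<open>i < m - r\<close>.\<close>
definition RM_redundancy :: "nat \<Rightarrow> nat \<Rightarrow> nat" where
  "RM_redundancy r m = (\<Sum>i<m - r. m choose i)"

lemma RM_redundancy_le: "RM_redundancy r m \<le> 2 ^ m"
proof -
  have "RM_redundancy r m \<le> (\<Sum>i\<le>m. m choose i)"
    unfolding RM_redundancy_def by (rule sum_mono2) auto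
  then show ?thesis by (simp add: choose_row_sum)
qed

lemma RM_redundancy_0: "RM_redundancy 0 m = 2 ^ m - 1"
proof -
  have "(\<Sum>i\<le>m. m choose i) = RM_redundancy 0 m + 1"
    unfolding RM_redundancy_def by (simp add: lessThan_Suc_atMost[symmetric])
  then show ?thesis by (simp add: choose_row_sum)
qed

lemma RM_redundancy_eq_0: "m \<le> r \<Longrightarrow> RM_redundancy r m = 0"
  unfolding RM_redundancy_def by simp

lemma RM_redundancy_Suc_Suc:
  assumes "r < m"
  shows "RM_redundancy (Suc r) (Suc m) = RM_redundancy (Suc r) m + RM_redundancy r m"
proof -
  obtain K where K: "m - r = Suc K"
    using assms by (metis Suc_diff_Suc)
  have "(\<Sum>i<Suc K. Suc m choose i) = (\<Sum>i<K. m choose i) + (\<Sum>i<Suc K. m choose i)"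
    by (induction K) simp_all
  moreover have "Suc m - Suc r = Suc K" "m - Suc r = K"
    using K by simp_all
  ultimately show ?thesis
    unfolding RM_redundancy_def K by simp
qed

lemma RM_length: "v \<in> RM r m \<Longrightarrow> length v = 2 ^ m"
  by (induction r m arbitrary: v rule: RM.induct) (auto split: if_splits)

lemma covers_RM: "covers t (2 ^ m) (RM r m) (RM_redundancy r m)"
proof (induction r m rule: RM.induct)
  case (1 m)
  then show ?case
    using covers_repetition[of t "2 ^ m"] by (simp add: RM_redundancy_0)
next
  case (2 r)
  then show ?case
    using covers_full[of t 1] by (simp add: RM_redundancy_eq_0)
next
  case (3 r m)
  show ?case
  proof (cases "Suc m \<le> Suc r")
    case True
    then show ?thesis
      using covers_full[of t "2 ^ Suc m"] by (simp add: RM_redundancy_eq_0)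
  next
    case False
    then show ?thesis
      using covers_plotkin[OF "3.IH"] by (simp add: RM_redundancy_Suc_Suc)
  qed
qed

lemma card_RM: "card (RM r m) = 2 ^ (2 ^ m - RM_redundancy r m)"
proof (induction r m rule: RM.induct)
  case (1 m)
  have "replicate (2 ^ m) False \<noteq> replicate (2 ^ m) True"
    by (simp add: replicate_eq_replicate)
  then show ?case
    using RM_redundancy_0[of m] by simp
next
  case (2 r)
  then show ?case
    using card_vectors[of 1] by (simp add: RM_redundancy_eq_0)
next
  case (3 r m)
  show ?case
  proof (cases "Suc m \<le> Suc r")
    case True
    then show ?thesis
      using card_vectors[of "2 ^ Suc m"] by (simp add: RM_redundancy_eq_0)
  next
    case False
    have "card (RM (Suc r) (Suc m)) = card (RM (Suc r) m) * card (RM r m)"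
      using False card_plotkin[of "RM (Suc r) m" "2 ^ m" "RM r m"] by (simp add: RM_length subset_iff)
    also have "\<dots> = 2 ^ (2 ^ m - RM_redundancy (Suc r) m + (2 ^ m - RM_redundancy r m))"
      using 3 False by (simp add: power_add)
    also have "2 ^ m - RM_redundancy (Suc r) m + (2 ^ m - RM_redundancy r m)
        = 2 ^ Suc m - RM_redundancy (Suc r) (Suc m)"
      using RM_redundancy_le[of "Suc r" m] RM_redundancy_le[of r m] False
      by (simp add: RM_redundancy_Suc_Suc)
    finally show ?thesis .
  qed
qed

section \<open>The sphere-covering bound\<close>

definition twt_ball :: "nat \<Rightarrow> nat \<Rightarrow> nat \<Rightarrow> bool list list set" where
  "twt_ball t n \<rho> = {E. is_matrix t n E \<and> twt E \<le> \<rho>}"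

lemma card_supported_vectors_le:
  assumes "finite J"
  shows "card {v :: bool list. length v = n \<and> supp v \<subseteq> J} \<le> 2 ^ card J"
proof -
  let ?A = "{v :: bool list. length v = n \<and> supp v \<subseteq> J}"
  have "inj_on supp ?A"
  proof (rule inj_onI)
    fix v w assume "v \<in> ?A" "w \<in> ?A" "supp v = supp w"
    then show "v = w"
      by (intro nth_equalityI) (auto simp: supp_def set_eq_iff)
  qed
  then have "card ?A \<le> card (Pow J)"
    using assms by (intro card_inj_on_le) auto
  then show ?thesis
    using assms by (simp add: card_Pow)
qed

lemma twt_ball_subset_supported:
  assumes "\<rho> \<le> n"
  shows "twt_ball t n \<rho>
    \<subseteq> (\<Union>J\<in>{J. J \<subseteq> {..<n} \<and> card J = \<rho>}. {E. set E \<subseteq> {v. length v = n \<and> supp v \<subseteq> J} \<and> length E = t})"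
proof
  fix E assume "E \<in> twt_ball t n \<rho>"
  define X where "X = (\<Union>v\<in>set E. supp v)"
  have E: "is_matrix t n E" "card X \<le> \<rho>"
    using \<open>E \<in> twt_ball t n \<rho>\<close> by (simp_all add: twt_ball_def twt_eq_card_supp X_def)
  have "X \<subseteq> {..<n}"
    using E(1) supp_subset by (fastforce simp: is_matrix_def X_def)
  then obtain J where J: "X \<subseteq> J" "J \<subseteq> {..<n}" "card J = \<rho>"
    using exists_subset_between[of X \<rho> "{..<n}"] E(2) assms by auto
  then have "E \<in> {E. set E \<subseteq> {v. length v = n \<and> supp v \<subseteq> J} \<and> length E = t}"
    using E(1) by (auto simp: is_matrix_def X_def)
  with J(2,3) show "E \<in> (\<Union>J\<in>{J. J \<subseteq> {..<n} \<and> card J = \<rho>}.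
      {E. set E \<subseteq> {v. length v = n \<and> supp v \<subseteq> J} \<and> length E = t})"
    by blast
qed

lemma card_twt_ball_le:
  assumes "\<rho> \<le> n"
  shows "card (twt_ball t n \<rho>) \<le> (n choose \<rho>) * 2 ^ (\<rho> * t)"
proof -
  define JJ where "JJ = {J. J \<subseteq> {..<n} \<and> card J = \<rho>}"
  define M where "M J = {E. set E \<subseteq> {v. length v = n \<and> supp v \<subseteq> J} \<and> length E = t}" for J
  have fin: "finite {v :: bool list. length v = n \<and> supp v \<subseteq> J}" for J
    by (rule finite_subset[OF _ finite_vectors[of n]]) auto
  have "card (twt_ball t n \<rho>) \<le> card (\<Union>J\<in>JJ. M J)"
    using twt_ball_subset_supported[OF assms, of t] unfolding JJ_def M_def
    by (rule card_mono[rotated]) (auto intro!: finite_lists_length_eq fin)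
  also have "\<dots> \<le> (\<Sum>J\<in>JJ. card (M J))"
    by (rule card_UN_le) (simp add: JJ_def)
  also have "\<dots> \<le> (\<Sum>J\<in>JJ. 2 ^ (\<rho> * t))"
  proof (rule sum_mono)
    fix J assume "J \<in> JJ"
    then have "finite J" "card J = \<rho>"
      by (auto simp: JJ_def finite_subset)
    have "card (M J) = card {v :: bool list. length v = n \<and> supp v \<subseteq> J} ^ t"
      unfolding M_def by (rule card_lists_length_eq[OF fin])
    also have "\<dots> \<le> (2 ^ \<rho>) ^ t"
      using card_supported_vectors_le[OF \<open>finite J\<close>] \<open>card J = \<rho>\<close> by (simp add: power_mono)
    finally show "card (M J) \<le> 2 ^ (\<rho> * t)"
      by (simp add: power_mult)
  qed
  also have "\<dots> = (n choose \<rho>) * 2 ^ (\<rho> * t)"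
    using n_subsets[of "{..<n}" \<rho>] by (simp add: JJ_def)
  finally show ?thesis .
qed

lemma sphere_covering_bound:
  assumes C: "C \<subseteq> {v. length v = n}" and cov: "covers t n C \<rho>"
  shows "2 ^ (t * n) \<le> card C ^ t * card (twt_ball t n \<rho>)"
proof -
  define Ct where "Ct = {Cm. set Cm \<subseteq> C \<and> length Cm = t}"
  have fin_C: "finite C"
    using finite_subset[OF C finite_vectors] .
  have fin_ball: "finite (twt_ball t n \<rho>)"
    using finite_is_matrix by (rule finite_subset[rotated]) (auto simp: twt_ball_def)
  have "{V. is_matrix t n V} \<subseteq> (\<lambda>(Cm, E). madd E Cm) ` (Ct \<times> twt_ball t n \<rho>)"
  proof
    fix V assume "V \<in> {V. is_matrix t n V}"
    then have V: "is_matrix t n V" by simp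
    then obtain Cm where Cm: "is_matrix t n Cm" "set Cm \<subseteq> C" "tdist V Cm \<le> \<rho>"
      using cov unfolding covers_def by blast
    have "Cm \<in> Ct" "madd V Cm \<in> twt_ball t n \<rho>"
      using Cm is_matrix_madd[OF V Cm(1)] by (auto simp: Ct_def twt_ball_def tdist_def is_matrix_def)
    moreover have "V = madd (madd V Cm) Cm"
      using madd_cancel[OF V Cm(1)] by simp
    ultimately show "V \<in> (\<lambda>(Cm, E). madd E Cm) ` (Ct \<times> twt_ball t n \<rho>)"
      by force
  qed
  then have "card {V. is_matrix t n V} \<le> card (Ct \<times> twt_ball t n \<rho>)"
    using fin_C fin_ball
    by (intro surj_card_le) (auto simp: Ct_def intro!: finite_lists_length_eq)
  then show ?thesis
    by (simp add: card_is_matrix card_cartesian_product Ct_def card_lists_length_eq[OF fin_C])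
qed

lemma R_RM_covers: "covers t (2 ^ m) (RM r m) (R_RM t r m)"
  unfolding R_RM_def gen_cov_radius_eq_Least by (rule LeastI) (rule covers_RM)

lemma R_RM_le_redundancy: "R_RM t r m \<le> RM_redundancy r m"
  unfolding R_RM_def gen_cov_radius_eq_Least by (rule Least_le) (rule covers_RM)

lemma redundancy_le_R_RM: "t * RM_redundancy r m \<le> R_RM t r m * (m + t)"
proof -
  let ?R = "R_RM t r m" and ?S = "RM_redundancy r m"
  have "?R \<le> 2 ^ m"
    using R_RM_le_redundancy RM_redundancy_le order.trans by blast
  have ball: "card (twt_ball t (2 ^ m) ?R) \<le> (2 ^ m) ^ ?R * 2 ^ (?R * t)"
    using card_twt_ball_le[OF \<open>?R \<le> 2 ^ m\<close>, of t] binomial_le_pow[OF \<open>?R \<le> 2 ^ m\<close>]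
    by (meson mult_le_mono1 order.trans)
  have "2 ^ (t * 2 ^ m) \<le> card (RM r m) ^ t * card (twt_ball t (2 ^ m) ?R)"
    using RM_length R_RM_covers by (intro sphere_covering_bound) auto
  also have "\<dots> \<le> 2 ^ ((2 ^ m - ?S) * t) * ((2 ^ m) ^ ?R * 2 ^ (?R * t))"
    using ball by (simp add: card_RM power_mult)
  also have "\<dots> = 2 ^ ((2 ^ m - ?S) * t + ?R * (m + t))"
    by (simp add: power_add power_mult[symmetric] algebra_simps)
  finally have "t * 2 ^ m \<le> (2 ^ m - ?S) * t + ?R * (m + t)"
    by (rule power_le_imp_le_exp[rotated]) simp
  moreover have "(2 ^ m - ?S) * t + ?S * t = t * 2 ^ m"
    using RM_redundancy_le[of r m] by (metis add_mult_distrib le_add_diff_inverse2 mult.commute)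
  ultimately show ?thesis
    by (simp add: mult.commute)
qed

lemma binomial_le_R_RM:
  assumes "1 \<le> k"
  shows "t * k * ((k + r) choose k) \<le> (r + 1) * (k + r + t) * R_RM t r (k + r)"
proof -
  obtain k' where k': "k = Suc k'"
    using assms by (cases k) auto
  have "k * ((k + r) choose k) = (r + 1) * ((k + r) choose (k - 1))"
    using Suc_times_binomial_add[of k' r] by (simp add: k')
  also have "\<dots> \<le> (r + 1) * RM_redundancy r (k + r)"
    unfolding RM_redundancy_def using assms by (intro mult_left_mono member_le_sum) auto
  finally have "t * k * ((k + r) choose k) \<le> (r + 1) * (t * RM_redundancy r (k + r))"
    by (simp add: mult.assoc mult.left_commute)
  also have "\<dots> \<le> (r + 1) * (k + r + t) * R_RM t r (k + r)"
    using mult_le_mono2[OF redundancy_le_R_RM[of t r "k + r"], of "r + 1"] by (simp only: ac_simps)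
  finally show ?thesis .
qed

section \<open>Binomial coefficients and the binary entropy\<close>

lemma partial_binomial_sum_le:
  fixes k r :: nat
  assumes "k \<le> r"
  shows "(\<Sum>i<k. (k + r) choose i) * (k ^ k * r ^ r) \<le> (k + r) ^ (k + r)"
proof -
  have term_le: "k ^ k * r ^ r \<le> k ^ i * r ^ (k + r - i)" if "i < k" for i
  proof -
    have "k ^ k * r ^ r = k ^ i * k ^ (k - i) * r ^ r"
      using that by (simp add: power_add[symmetric])
    also have "\<dots> \<le> k ^ i * r ^ (k - i) * r ^ r"
      using assms by (simp add: power_mono)
    also have "\<dots> = k ^ i * r ^ (k + r - i)"
      using that by (simp add: power_add[symmetric] mult.assoc)
    finally show ?thesis .
  qed
  have "(\<Sum>i<k. (k + r) choose i) * (k ^ k * r ^ r)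
      \<le> (\<Sum>i<k. ((k + r) choose i) * k ^ i * r ^ (k + r - i))"
    unfolding sum_distrib_right mult.assoc by (intro sum_mono mult_left_mono term_le) auto
  also have "\<dots> \<le> (\<Sum>i\<le>k + r. ((k + r) choose i) * k ^ i * r ^ (k + r - i))"
    by (rule sum_mono2) auto
  also have "\<dots> = (k + r) ^ (k + r)"
    by (simp add: binomial)
  finally show ?thesis .
qed

definition stirling_remainder :: "nat \<Rightarrow> real" where
  "stirling_remainder n = ln (fact n) - (real n + 1/2) * ln (real n) + real n"

lemma stirling_remainder_diff:
  assumes "1 \<le> n"
  shows "stirling_remainder n - stirling_remainder (Suc n)
           = (real n + 1/2) * (ln (real n + 1) - ln (real n)) - 1"
proof -
  have "ln (fact (Suc n) :: real) = ln (real n + 1) + ln (fact n)"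
    by (simp add: ln_mult add.commute)
  then show ?thesis
    unfolding stirling_remainder_def by (simp add: algebra_simps)
qed

lemma stirling_remainder_le_1:
  assumes "1 \<le> n"
  shows "stirling_remainder n \<le> 1"
proof -
  have step: "stirling_remainder (Suc j) \<le> stirling_remainder j" if "1 \<le> j" for j
  proof -
    have "2 * ((real j + 1) - real j) / (real j + (real j + 1)) \<le> ln (real j + 1) - ln (real j)"
      using that by (intro ln_inverse_approx_ge) auto
    then have "(real j + 1/2) * (2 / (2 * real j + 1))
        \<le> (real j + 1/2) * (ln (real j + 1) - ln (real j))"
      by (intro mult_left_mono) auto
    moreover have "(real j + 1/2) * (2 / (2 * real j + 1)) = 1"
      by (simp add: field_simps)
    ultimately show ?thesis
      using stirling_remainder_diff[of j] that by linarith
  qed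
  have "stirling_remainder n \<le> stirling_remainder 1"
    by (rule lift_Suc_antimono_le_ivl[of "{1..}"]) (use step assms in auto)
  then show ?thesis
    by (simp add: stirling_remainder_def)
qed

lemma stirling_remainder_ge:
  assumes "1 \<le> k" "k \<le> n"
  shows "stirling_remainder k - 1 / (4 * real k) \<le> stirling_remainder n"
proof -
  have step: "stirling_remainder j - 1 / (4 * real j)
      \<le> stirling_remainder (Suc j) - 1 / (4 * real (Suc j))" if "1 \<le> j" for j
  proof -
    have "ln (real j + 1) - ln (real j) \<le> 1 * (inverse (real j) + inverse (real j + 1)) / 2"
      using that by (intro ln_inverse_approx_le) auto
    then have "(real j + 1/2) * (ln (real j + 1) - ln (real j))
        \<le> (real j + 1/2) * ((inverse (real j) + inverse (real j + 1)) / 2)"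
      by (intro mult_left_mono) auto
    moreover have "(real j + 1/2) * ((inverse (real j) + inverse (real j + 1)) / 2) - 1
        = 1 / (4 * real j) - 1 / (4 * real (Suc j))"
      using that by (simp add: divide_simps) (simp add: algebra_simps)
    ultimately show ?thesis
      using stirling_remainder_diff[of j] that by linarith
  qed
  have "stirling_remainder k - 1 / (4 * real k) \<le> stirling_remainder n - 1 / (4 * real n)"
    by (rule lift_Suc_mono_le_ivl[of "{1..}" "\<lambda>j. stirling_remainder j - 1 / (4 * real j)"])
      (use step assms in auto)
  moreover have "0 \<le> 1 / (4 * real n)"
    by simp
  ultimately show ?thesis
    by linarith
qed

lemma binomial_ge_entropy:
  fixes k r :: nat
  assumes "1 \<le> k" "1 \<le> r"
  shows "exp (-1 - 1 / (4 * real k)) * sqrt (real (k + r) / (real k * real r))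
           * (real (k + r) ^ (k + r) / (real k ^ k * real r ^ r))
         \<le> real ((k + r) choose k)"
proof -
  define m where "m = k + r"
  have pos: "0 < real k" "0 < real r" "0 < real m"
    using assms by (auto simp: m_def)
  have "real (m choose k) = fact m / (fact k * fact r)"
    using binomial_fact[of k m] by (simp add: m_def)
  then have ln_binomial: "ln (real (m choose k)) = ln (fact m) - ln (fact k) - ln (fact r)"
    by (simp add: ln_div ln_mult)
  have "ln (exp (-1 - 1 / (4 * real k)) * sqrt (m / (k * r)) * (m ^ m / (k ^ k * r ^ r)))
      = -1 - 1 / (4 * real k) + (ln m - ln k - ln r) / 2 + (m * ln m - k * ln k - r * ln r)"
    using pos by (simp add: ln_mult ln_div ln_sqrt ln_realpow)
  also have "\<dots> \<le> stirling_remainder m - stirling_remainder k - stirling_remainder r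
      + (ln m - ln k - ln r) / 2 + (m * ln m - k * ln k - r * ln r)"
    using stirling_remainder_ge[of k m] stirling_remainder_le_1[of r] assms by (simp add: m_def)
  also have "\<dots> = ln (real (m choose k))"
    unfolding ln_binomial stirling_remainder_def by (simp add: m_def field_simps)
  finally show ?thesis
    using pos by (simp add: m_def)
qed

lemma H2_nonneg:
  assumes "0 < x" "x < 1"
  shows "0 \<le> H2 x"
proof -
  have "x * log 2 x \<le> 0" "(1 - x) * log 2 (1 - x) \<le> 0"
    using assms by (auto intro!: mult_nonneg_nonpos)
  then show ?thesis
    unfolding H2_def by simp
qed

lemma entropy_powr:
  fixes k r :: nat
  assumes "1 \<le> k" "1 \<le> r"
  shows "2 powr (real (k + r) * H2 (real r / real (k + r)))
           = real (k + r) ^ (k + r) / (real k ^ k * real r ^ r)"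
proof -
  define m where "m = real (k + r)"
  have pos: "0 < real k" "0 < real r" "0 < m"
    using assms by (auto simp: m_def)
  have "1 - r / m = k / m"
    using pos by (simp add: m_def field_simps)
  have log_ln: "log 2 (r / m) * ln 2 = ln r - ln m" "log 2 (k / m) * ln 2 = ln k - ln m"
    using pos by (simp_all add: log_def ln_div)
  have "m * H2 (r / m) * ln 2
      = - (m * (r / m)) * (log 2 (r / m) * ln 2) - (m * (k / m)) * (log 2 (k / m) * ln 2)"
    unfolding H2_def \<open>1 - r / m = k / m\<close> by (simp add: algebra_simps)
  also have "\<dots> = - r * (ln r - ln m) - k * (ln k - ln m)"
    using pos by (simp add: log_ln)
  also have "\<dots> = ln (m ^ (k + r) / (k ^ k * r ^ r))"
    using pos by (simp add: ln_div ln_mult ln_realpow m_def algebra_simps)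
  finally show ?thesis
    using pos by (simp add: powr_def m_def)
qed

section \<open>Asymptotics of the generalized covering radius\<close>

lemma sqrt_rescale:
  fixes k r m :: real
  assumes "0 < k" "0 < r" "0 < m"
  shows "sqrt (k / m / (8 * r ^ 3)) * sqrt 8 * (r * m) = k * sqrt (m / (k * r))"
proof -
  have "sqrt (k / m / (8 * r ^ 3)) * sqrt 8 * (r * m) = sqrt (k / m / (8 * r ^ 3) * 8 * (r * m) ^ 2)"
    by (simp only: real_sqrt_mult real_sqrt_abs) (use assms in simp)
  also have "k / m / (8 * r ^ 3) * 8 * (r * m) ^ 2 = k ^ 2 * (m / (k * r))"
    using assms by (simp add: field_simps power2_eq_square power3_eq_cube)
  finally show ?thesis
    by (simp only: real_sqrt_mult real_sqrt_abs) (use assms in simp)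
qed

lemma R_RM_le_entropy:
  fixes k r t :: nat
  assumes "1 \<le> k" "k \<le> r"
  shows "real (R_RM t r (k + r)) \<le> 2 powr (real (k + r) * H2 (real r / real (k + r)))"
proof -
  have "R_RM t r (k + r) \<le> (\<Sum>i<k. (k + r) choose i)"
    using R_RM_le_redundancy[of t r "k + r"] by (simp add: RM_redundancy_def)
  then have "R_RM t r (k + r) * (k ^ k * r ^ r) \<le> (k + r) ^ (k + r)"
    using partial_binomial_sum_le[OF assms(2)] by (meson le_trans mult_le_mono1)
  then have "real (R_RM t r (k + r)) * (real k ^ k * real r ^ r) \<le> real (k + r) ^ (k + r)"
    unfolding of_nat_power[symmetric] of_nat_mult[symmetric] of_nat_le_iff .
  then have "real (R_RM t r (k + r)) \<le> real (k + r) ^ (k + r) / (real k ^ k * real r ^ r)"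
    using assms by (simp add: pos_le_divide_eq)
  then show ?thesis
    using entropy_powr[of k r] assms by simp
qed

text \<open>The hypothesis \<open>margin\<close> pays for the factors \<open>(r + 1) / r\<close> and \<open>(m + t) / m\<close> lost in
  \<open>binomial_le_R_RM\<close>; it holds for large \<open>m\<close> because \<open>exp (-1) > 1 / sqrt 8\<close>.\<close>
lemma R_RM_ge_entropy:
  fixes k r t :: nat
  assumes "1 \<le> k" "k \<le> r"
    and margin: "1 \<le> sqrt 8 * exp (-1 - 1 / (4 * real k))
                     * (real r / (real r + 1)) * (real (k + r) / (real (k + r) + real t))"
  shows "real t * sqrt (real k / real (k + r) / (8 * real r ^ 3))
           * 2 powr (real (k + r) * H2 (real r / real (k + r)))
         \<le> real (R_RM t r (k + r))"
proof -
  define m where "m = k + r"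
  define E where "E = real m ^ m / (real k ^ k * real r ^ r)"
  define c where "c = exp (-1 - 1 / (4 * real k))"
  define s where "s = sqrt (real k / real m / (8 * real r ^ 3))"
  have pos: "0 < real k" "0 < real r" "0 < real m" "0 < E" "0 < c" "0 \<le> s"
    using assms by (auto simp: m_def E_def c_def s_def)
  have "real (t * k * (m choose k)) \<le> real ((r + 1) * (m + t) * R_RM t r m)"
    using binomial_le_R_RM[OF assms(1), of t r] unfolding m_def by (rule of_nat_mono)
  then have binom_R:
    "real t * real k * real (m choose k) \<le> (real r + 1) * (real m + real t) * R_RM t r m"
    by (simp only: of_nat_mult of_nat_add of_nat_1)
  have D: "0 < real r + 1" "0 < real m + real t"
    using pos by simp_all
  have "sqrt 8 * c * (real r / (real r + 1)) * (real m / (real m + real t))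
      = sqrt 8 * c * real r * real m / ((real r + 1) * (real m + real t))"
    by (simp only: times_divide_eq_right times_divide_eq_left divide_divide_eq_left)
  then have "(real r + 1) * (real m + real t) \<le> sqrt 8 * c * real r * real m"
    using margin D unfolding c_def m_def by (simp add: le_divide_eq_1_pos)
  then have "real t * s * E * ((real r + 1) * (real m + real t))
      \<le> real t * s * E * (sqrt 8 * c * real r * real m)"
    using pos by (intro mult_left_mono) auto
  also have "\<dots> = real t * c * E * (s * sqrt 8 * (real r * real m))"
    by (simp only: ac_simps)
  also have "\<dots> = real t * c * E * (real k * sqrt (real m / (real k * real r)))"
    using sqrt_rescale[of k r m] pos by (simp only: s_def)
  also have "\<dots> = real t * real k * (c * sqrt (real m / (real k * real r)) * E)"
    by (simp only: ac_simps)
  also have "\<dots> \<le> real t * real k * (m choose k)"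
    using binomial_ge_entropy[of k r] assms unfolding m_def E_def c_def
    by (intro mult_left_mono) simp_all
  also have "\<dots> \<le> (real r + 1) * (real m + real t) * R_RM t r m"
    by (rule binom_R)
  finally have "real t * s * E * ((real r + 1) * (real m + real t))
      \<le> R_RM t r m * ((real r + 1) * (real m + real t))"
    by (simp only: ac_simps)
  then have "real t * s * E \<le> R_RM t r m"
    using D by (simp only: mult_le_cancel_right_pos mult_pos_pos)
  moreover have "2 powr (real m * H2 (real r / real m)) = E"
    using entropy_powr[of k r] assms by (simp only: E_def m_def)
  ultimately show ?thesis
    by (simp only: s_def m_def)
qed

lemma one_less_sqrt_8_exp: "1 < sqrt 8 * exp (-1 :: real)"
proof -
  have "exp 1 < (272 / 100 :: real)"
    by (rule e_less_272)
  also have "\<dots> < sqrt 8"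
    by (rule real_less_rsqrt) (simp add: power2_eq_square)
  finally show ?thesis
    by (simp add: exp_minus field_simps)
qed

lemma eventually_margin_ge_1:
  fixes \<alpha> :: real and t :: nat
  assumes "0 < \<alpha>" "\<alpha> < 1"
  shows "\<forall>\<^sub>F m in sequentially. 1 \<le> sqrt 8 * exp (-1 - 1 / (4 * ((1 - \<alpha>) * real m)))
            * (\<alpha> * real m / (\<alpha> * real m + 1)) * (real m / (real m + real t))"
proof -
  have "0 < 1 - \<alpha>"
    using assms by simp
  with assms have "((\<lambda>m::nat. exp (-1 - 1 / (4 * ((1 - \<alpha>) * real m)))
            * (\<alpha> * real m / (\<alpha> * real m + 1)) * (real m / (real m + real t)))
         \<longlongrightarrow> exp (-1)) sequentially"
    by real_asymp
  from order_tendstoD(1)[OF tendsto_mult_left[OF this] one_less_sqrt_8_exp] show ?thesis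
    by (auto elim: eventually_mono simp: mult.assoc)
qed

lemma R_RM_bounds_at_rate:
  fixes \<alpha> :: real and m r t :: nat
  assumes "1/2 < \<alpha>" "\<alpha> < 1" "1 \<le> m" "\<alpha> * m = r"
    and margin: "1 \<le> sqrt 8 * exp (-1 - 1 / (4 * ((1 - \<alpha>) * real m)))
                     * (\<alpha> * real m / (\<alpha> * real m + 1)) * (real m / (real m + real t))"
  shows "real t * sqrt ((1 - \<alpha>) / (8 * (\<alpha> * real m) ^ 3)) * 2 powr (real m * H2 \<alpha>)
           \<le> real (R_RM t r m)"
    and "real (R_RM t r m) \<le> 2 powr (real m * H2 \<alpha>)"
proof -
  have "real r < real m"
    using assms by (simp flip: assms(4))
  then have "r < m" by simp
  define k where "k = m - r"
  have m: "m = k + r"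
    using \<open>r < m\<close> by (simp add: k_def)
  have k_real: "real k = (1 - \<alpha>) * m"
    using \<open>r < m\<close> assms(4) by (simp add: k_def of_nat_diff algebra_simps)
  have "1 \<le> k"
    using \<open>r < m\<close> by (simp add: k_def)
  have "(1 - \<alpha>) * m \<le> \<alpha> * m"
    using assms(1) by (intro mult_right_mono) auto
  then have "k \<le> r"
    unfolding k_real[symmetric] assms(4) by simp
  have \<alpha>: "real r / real m = \<alpha>" "real k / real m = 1 - \<alpha>"
    using k_real assms(3,4) by (simp_all add: field_simps)
  have "1 \<le> sqrt 8 * exp (-1 - 1 / (4 * real k)) * (real r / (real r + 1)) * (real m / (real m + real t))"
    using margin unfolding k_real[symmetric] assms(4) .
  then show "real t * sqrt ((1 - \<alpha>) / (8 * (\<alpha> * real m) ^ 3)) * 2 powr (real m * H2 \<alpha>)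
      \<le> real (R_RM t r m)"
    unfolding assms(4)
    by (rule R_RM_ge_entropy[OF \<open>1 \<le> k\<close> \<open>k \<le> r\<close>, of t, folded m, unfolded \<alpha>])
  show "real (R_RM t r m) \<le> 2 powr (real m * H2 \<alpha>)"
    using R_RM_le_entropy[OF \<open>1 \<le> k\<close> \<open>k \<le> r\<close>, of t, folded m] unfolding \<alpha> .
qed

theorem theorem16:
  fixes t :: nat and \<alpha> :: real
  assumes "t \<ge> 1" and "1/2 < \<alpha>" and "\<alpha> < 1"
  defines "F \<equiv> inf sequentially (principal {m::nat. \<exists>k::nat. \<alpha> * real m = real k})"
  shows "\<exists>e1 e2 :: nat \<Rightarrow> real. (e1 \<longlongrightarrow> 0) F \<and> (e2 \<longlongrightarrow> 0) F \<and>
    (\<forall>\<^sub>F m in F.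
       real t * sqrt ((1 - \<alpha>) / (8 * (\<alpha> * real m) ^ 3)) * 2 powr (real m * H2 \<alpha>) * (1 + e1 m)
         \<le> real (R_RM t (nat \<lfloor>\<alpha> * real m\<rfloor>) m)
     \<and> real (R_RM t (nat \<lfloor>\<alpha> * real m\<rfloor>) m)
         \<le> real t * 4 powr (H2 \<alpha>) * 2 powr (real m * H2 \<alpha>) * (1 + e2 m))"
proof -
  have "0 < \<alpha>"
    using assms(2) by simp
  have "1 \<le> (4 :: real) powr H2 \<alpha>"
    using H2_nonneg[OF \<open>0 < \<alpha>\<close> assms(3)] by (intro ge_one_powr_ge_zero) auto
  then have slack: "2 powr (real m * H2 \<alpha>) \<le> real t * 4 powr H2 \<alpha> * 2 powr (real m * H2 \<alpha>)" for m
    using assms(1) mult_mono[of 1 "real t" 1 "4 powr H2 \<alpha>"] by (simp add: mult_le_cancel_right1)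
  have "\<forall>\<^sub>F m in sequentially. (\<exists>k::nat. \<alpha> * real m = real k) \<longrightarrow>
       real t * sqrt ((1 - \<alpha>) / (8 * (\<alpha> * real m) ^ 3)) * 2 powr (real m * H2 \<alpha>) * (1 + 0)
         \<le> real (R_RM t (nat \<lfloor>\<alpha> * real m\<rfloor>) m)
     \<and> real (R_RM t (nat \<lfloor>\<alpha> * real m\<rfloor>) m)
         \<le> real t * 4 powr (H2 \<alpha>) * 2 powr (real m * H2 \<alpha>) * (1 + 0)"
    using eventually_margin_ge_1[OF \<open>0 < \<alpha>\<close> assms(3), of t] eventually_ge_at_top[of 1]
  proof eventually_elim
    case (elim m)
    then show ?case
      using R_RM_bounds_at_rate[OF assms(2,3) elim(2) _ elim(1)] slack[of m]
      by (auto intro: order.trans)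
  qed
  then show ?thesis
    unfolding F_def by (intro exI[of _ "\<lambda>_. 0"]) (simp add: eventually_inf_principal)
qed

end
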